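(* Let $A=(Q,R,F_A)$ be an RNNA, regarded as the coalgebra $c\colon Q\to G\mathcal{P}_{\mathsf{ufs}}Q=2\times(\mathcal{P}_{\mathsf{ufs}}Q)^{\mathbb{A}}\times[\mathbb{A}]\mathcal{P}_{\mathsf{ufs}}Q$, $c(q)=(f(q),\,a\mapsto\{q':q\xrightarrow{a}q'\},\,\langle a\rangle\{q':q\xrightarrow{\mathord{|}a}q'\})$ with $f(q)=1$ iff $q\in F_A$ and $a$ fresh for $q$. Let $c^\sharp\colon\mathcal{P}_{\mathsf{ufs}}Q\to G\mathcal{P}_{\mathsf{ufs}}Q$ be its determinization, $c^\sharp(S)=(\max_{s\in S}f(s),\,a\mapsto\bigcup_{s\in S}\{q':s\xrightarrow{a}q'\},\,\langle a\rangle\bigcup_{s\in S}\{q':s\xrightarrow{\mathord{|}a}q'\})$ with $a$ fresh for $S$, let $h$ be the unique $G$-coalgebra homomorphism from $(\mathcal{P}_{\mathsf{ufs}}Q,c^\sharp)$ to the terminal $G$-coalgebra $(\mathcal{P}_{\mathsf{fs}}(\overline{\mathbb{A}}^*/{=_\alpha}),\tau)$, and let $\ddagger c(q)=h(\{q\})$. Then for every state $q$, $\ddagger c(q)$ is the bar language accepted by $q$.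
   Context: Fix a countably infinite set $\mathbb{A}$ of names; $\mathsf{Nom}$: nominal sets and equivariant maps; $\mathrm{supp}$ least support, "fresh" means not in the support. $[\mathbb{A}]X=(\mathbb{A}\times X)/\sim$, $(a,x)\sim(b,y)$ iff $(a\,c)\cdot x=(b\,c)\cdot y$ for fresh $c$, classes $\langle a\rangle x$. $\mathcal{P}_{\mathsf{fs}}$, $\mathcal{P}_{\mathsf{ufs}}$: finitely / uniformly finitely supported ($\bigcup_{x\in A}\mathrm{supp}(x)$ finite) subsets. $GX=2\times X^{\mathbb{A}}\times[\mathbb{A}]X$, $2=\{0,1\}$. Bar strings: words over $\overline{\mathbb{A}}=\mathbb{A}\cup\{\mathord{|}a:a\in\mathbb{A}\}$; $=_\alpha$ the least equivalence with $x\,\mathord{|}a\,v=_\alpha x\,\mathord{|}b\,w$ whenever $\langle a\rangle v=\langle b\rangle w$ (i.e. $a=b,v=w$, or $b$ fresh for $v$ and $(a\,b)\cdot v=w$), classes $[w]_\alpha$. The terminal $G$-coalgebra has carrier $\mathcal{P}_{\mathsf{fs}}(\overline{\mathbb{A}}^*/{=_\alpha})$ and $\tau(S)=(b,a\mapsto\{[w]_\alpha:[aw]_\alpha\in S\},\langle a\rangle\{[w]_\alpha:[\mathord{|}a\,w]_\alpha\in S\})$, $b=1$ iff $[\varepsilon]_\alpha\in S$, $a$ fresh for $S$. An RNNA $(Q,R,F_A)$: orbit-finite nominal set $Q$, equivariant $R\subseteq Q\times\overline{\mathbb{A}}\times Q$ (write $q\xrightarrow{\sigma}q'$), equivariant $F_A\subseteq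 Q$ of final states, such that (a) if $q\xrightarrow{\mathord{|}a}q'$ and $\langle a\rangle q'=\langle b\rangle q''$ then $q\xrightarrow{\mathord{|}b}q''$; (b) for each $q$ the sets $\{(a,q'):q\xrightarrow{a}q'\}$ and $\{\langle a\rangle q':q\xrightarrow{\mathord{|}a}q'\}$ are finite. $q$ accepts $w=\sigma_1\cdots\sigma_n$ if there is a run $q\xrightarrow{\sigma_1}q_1\cdots\xrightarrow{\sigma_n}q_n$ with $q_n$ final; the accepted bar language is $\{[w]_\alpha:q\text{ accepts }w\}$. *)

theory Defs
  imports Main
begin

text \<open>The countably infinite set of names is modelled by nat.\<close>
type_synonym name = nat

definition perm_fin :: "(name \<Rightarrow> name) \<Rightarrow> bool" where
  "perm_fin p \<longleftrightarrow> bij p \<and> finite {a. p a \<noteq> a}"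

definition nswap :: "name \<Rightarrow> name \<Rightarrow> name \<Rightarrow> name" where
  "nswap a b c = (if c = a then b else if c = b then a else c)"

type_synonym 'x action = "(name \<Rightarrow> name) \<Rightarrow> 'x \<Rightarrow> 'x"

definition supports :: "'x action \<Rightarrow> name set \<Rightarrow> 'x \<Rightarrow> bool" where
  "supports act S x \<longleftrightarrow> (\<forall>p. perm_fin p \<and> (\<forall>a\<in>S. p a = a) \<longrightarrow> act p x = x)"

definition supp :: "'x action \<Rightarrow> 'x \<Rightarrow> name set" where
  "supp act x = \<Inter>{S. finite S \<and> supports act S x}"

definition fresh :: "'x action \<Rightarrow> name \<Rightarrow> 'x \<Rightarrow> bool" where
  "fresh act a x \<longleftrightarrow> a \<notin> supp act x"

definition nominal :: "'x set \<Rightarrow> 'x action \<Rightarrow> bool" where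
  "nominal X act \<longleftrightarrow>
     (\<forall>x\<in>X. act id x = x) \<and>
     (\<forall>p q x. perm_fin p \<and> perm_fin q \<and> x \<in> X \<longrightarrow> act (p \<circ> q) x = act p (act q x)) \<and>
     (\<forall>p x. perm_fin p \<and> x \<in> X \<longrightarrow> act p x \<in> X) \<and>
     (\<forall>x\<in>X. \<exists>S. finite S \<and> supports act S x)"

definition orbit :: "'x action \<Rightarrow> 'x \<Rightarrow> 'x set" where
  "orbit act x = {act p x | p. perm_fin p}"

definition orbit_finite :: "'x set \<Rightarrow> 'x action \<Rightarrow> bool" where
  "orbit_finite X act \<longleftrightarrow> finite (orbit act ` X)"

definition equivariant_map :: "'x set \<Rightarrow> 'x action \<Rightarrow> 'y action \<Rightarrow> ('x \<Rightarrow> 'y) \<Rightarrow> bool" where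
  "equivariant_map X actX actY h \<longleftrightarrow>
     (\<forall>p x. perm_fin p \<and> x \<in> X \<longrightarrow> h (actX p x) = actY p (h x))"

definition setact :: "'x action \<Rightarrow> 'x set action" where
  "setact act p S = act p ` S"

definition Pfs :: "'x set \<Rightarrow> 'x action \<Rightarrow> 'x set set" where
  "Pfs X act = {S. S \<subseteq> X \<and> (\<exists>T. finite T \<and> supports (setact act) T S)}"

definition Pufs :: "'x set \<Rightarrow> 'x action \<Rightarrow> 'x set set" where
  "Pufs X act = {S. S \<subseteq> X \<and> finite (\<Union>x\<in>S. supp act x)}"

definition abs_rel :: "'x action \<Rightarrow> name \<times> 'x \<Rightarrow> name \<times> 'x \<Rightarrow> bool" where
  "abs_rel act ax by \<longleftrightarrow>
     (case ax of (a, x) \<Rightarrow> case by of (b, y) \<Rightarrow>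
       (\<exists>c. c \<noteq> a \<and> c \<noteq> b \<and> fresh act c x \<and> fresh act c y \<and>
            act (nswap a c) x = act (nswap b c) y))"

text \<open>The class \<open><a>x\<close> in [A]X, as a set of representatives.\<close>
definition abs_cl :: "'x set \<Rightarrow> 'x action \<Rightarrow> name \<Rightarrow> 'x \<Rightarrow> (name \<times> 'x) set" where
  "abs_cl X act a x = {(b, y). y \<in> X \<and> abs_rel act (a, x) (b, y)}"

definition abs_map :: "'y set \<Rightarrow> 'y action \<Rightarrow> ('x \<Rightarrow> 'y) \<Rightarrow> (name \<times> 'x) set \<Rightarrow> (name \<times> 'y) set" where
  "abs_map Y actY h C = (\<Union>(a, x)\<in>C. abs_cl Y actY a (h x))"

type_synonym 'x Gobj = "bool \<times> (name \<Rightarrow> 'x) \<times> (name \<times> 'x) set"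

definition Gmap :: "'y set \<Rightarrow> 'y action \<Rightarrow> ('x \<Rightarrow> 'y) \<Rightarrow> 'x Gobj \<Rightarrow> 'y Gobj" where
  "Gmap Y actY h g = (case g of (b, f, C) \<Rightarrow> (b, h \<circ> f, abs_map Y actY h C))"

definition G_hom ::
  "'x set \<Rightarrow> 'x action \<Rightarrow> ('x \<Rightarrow> 'x Gobj) \<Rightarrow> 'y set \<Rightarrow> 'y action \<Rightarrow> ('y \<Rightarrow> 'y Gobj) \<Rightarrow> ('x \<Rightarrow> 'y) \<Rightarrow> bool" where
  "G_hom X actX cX Y actY cY h \<longleftrightarrow>
     (\<forall>x\<in>X. h x \<in> Y) \<and> equivariant_map X actX actY h \<and>
     (\<forall>x\<in>X. Gmap Y actY h (cX x) = cY (h x))"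

datatype bletter = Plain name | Bar name

definition bperm :: "bletter action" where
  "bperm p l = (case l of Plain a \<Rightarrow> Plain (p a) | Bar a \<Rightarrow> Bar (p a))"

definition wperm :: "bletter list action" where
  "wperm p w = map (bperm p) w"

definition alpha_step :: "bletter list \<Rightarrow> bletter list \<Rightarrow> bool" where
  "alpha_step u u' \<longleftrightarrow>
     (\<exists>x a v b w. u = x @ Bar a # v \<and> u' = x @ Bar b # w \<and>
        ((a = b \<and> v = w) \<or> (fresh wperm b v \<and> wperm (nswap a b) v = w)))"

definition alpha_eq :: "bletter list \<Rightarrow> bletter list \<Rightarrow> bool" where
  "alpha_eq = equivclp alpha_step"

type_synonym bclass = "bletter list set"

definition acls :: "bletter list \<Rightarrow> bclass" where
  "acls w = {v. alpha_eq w v}"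

definition clsperm :: "bclass action" where
  "clsperm = setact wperm"

definition langperm :: "bclass set action" where
  "langperm = setact clsperm"

definition Term :: "bclass set set" where
  "Term = Pfs (range acls) clsperm"

definition tau :: "bclass set \<Rightarrow> bclass set Gobj" where
  "tau L = (let a0 = (SOME a. fresh langperm a L) in
     (acls [] \<in> L,
      \<lambda>a. {acls w | w. acls (Plain a # w) \<in> L},
      abs_cl Term langperm a0 {acls w | w. acls (Bar a0 # w) \<in> L}))"

definition rnna :: "'q set \<Rightarrow> 'q action \<Rightarrow> ('q \<times> bletter \<times> 'q) set \<Rightarrow> 'q set \<Rightarrow> bool" where
  "rnna Q act R F \<longleftrightarrow>
     nominal Q act \<and> orbit_finite Q act \<and>
     R \<subseteq> Q \<times> UNIV \<times> Q \<and>
     (\<forall>p q s q'. perm_fin p \<and> (q, s, q') \<in> R \<longrightarrow> (act p q, bperm p s, act p q') \<in> R) \<and>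
     F \<subseteq> Q \<and> (\<forall>p q. perm_fin p \<and> q \<in> F \<longrightarrow> act p q \<in> F) \<and>
     (\<forall>q a q' b q''. (q, Bar a, q') \<in> R \<and> q'' \<in> Q \<and> abs_rel act (a, q') (b, q'')
         \<longrightarrow> (q, Bar b, q'') \<in> R) \<and>
     (\<forall>q\<in>Q. finite {(a, q'). (q, Plain a, q') \<in> R} \<and>
             finite {abs_cl Q act a q' | a q'. (q, Bar a, q') \<in> R})"

inductive accepts :: "('q \<times> bletter \<times> 'q) set \<Rightarrow> 'q set \<Rightarrow> 'q \<Rightarrow> bletter list \<Rightarrow> bool"
  for R F where
  acc_nil: "q \<in> F \<Longrightarrow> accepts R F q []"
| acc_cons: "(q, s, q') \<in> R \<Longrightarrow> accepts R F q' w \<Longrightarrow> accepts R F q (s # w)"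

definition bar_lang :: "('q \<times> bletter \<times> 'q) set \<Rightarrow> 'q set \<Rightarrow> 'q \<Rightarrow> bclass set" where
  "bar_lang R F q = {acls w | w. accepts R F q w}"

definition succs :: "('q \<times> bletter \<times> 'q) set \<Rightarrow> bletter \<Rightarrow> 'q set \<Rightarrow> 'q set" where
  "succs R s S = (\<Union>x\<in>S. {q'. (x, s, q') \<in> R})"

definition det :: "'q set \<Rightarrow> 'q action \<Rightarrow> ('q \<times> bletter \<times> 'q) set \<Rightarrow> 'q set \<Rightarrow> 'q set \<Rightarrow> 'q set Gobj" where
  "det Q act R F S = (let a0 = (SOME a. fresh (setact act) a S) in
     (\<exists>s\<in>S. s \<in> F,
      \<lambda>a. succs R (Plain a) S,
      abs_cl (Pufs Q act) (setact act) a0 (succs R (Bar a0) S)))"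

end

theory Submission
  imports Defs
begin

text \<open>
  For a finite set S of states, the union of the bar languages of S satisfies three equations:
  it contains the empty word iff S contains a final state, it contains Plain a # w iff the
  Plain a-successors of S accept w, and it contains Bar b # w iff for some fresh name e the
  Bar e-successors of S accept the renamed tail (b e)\<cdot>w; the last step uses that bar
  transitions are closed under \<open>\<alpha>\<close>-equivalence of their targets. The homomorphism
  condition says that h S satisfies the same equations, read off through \<open>\<tau>\<close>, and in
  the bar case even for every e outside a finite set: the names picked by Hilbert choice in det
  and \<open>\<tau>\<close> can be exchanged for e because h is equivariant and the abstraction
  equation holds for every fresh name. Induction on the length of w identifies the two sides.
\<close>

section \<open>Transpositions and finite permutations\<close>

lemma nswap_nswap [simp]: "nswap a b (nswap a b x) = x"
  by (simp add: nswap_def)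

lemma nswap_comp_self [simp]: "nswap a b \<circ> nswap a b = id"
  by (rule ext) simp

lemma nswap_same [simp]: "nswap a a = id"
  by (rule ext) (simp add: nswap_def)

lemma nswap_left [simp]: "nswap a b a = b"
  and nswap_right [simp]: "nswap a b b = a"
  by (simp_all add: nswap_def)

lemma nswap_other [simp]: "c \<noteq> a \<Longrightarrow> c \<noteq> b \<Longrightarrow> nswap a b c = c"
  by (simp add: nswap_def)

lemma bij_nswap: "bij (nswap a b)"
  by (rule o_bij[of "nswap a b"]) simp_all

lemma inj_nswap: "inj (nswap a b)"
  using bij_nswap bij_is_inj by blast

lemma nswap_conj: "inj p \<Longrightarrow> nswap (p a) (p b) (p c) = p (nswap a b c)"
  by (auto simp: nswap_def inj_eq)

lemma perm_fin_nswap [simp]: "perm_fin (nswap a b)"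
proof -
  have "{c. nswap a b c \<noteq> c} \<subseteq> {a, b}"
    by (auto simp: nswap_def)
  then show ?thesis
    unfolding perm_fin_def using finite_subset bij_nswap by blast
qed

lemma perm_fin_comp [simp]: "perm_fin p \<Longrightarrow> perm_fin q \<Longrightarrow> perm_fin (p \<circ> q)"
proof -
  assume "perm_fin p" "perm_fin q"
  moreover have "{a. (p \<circ> q) a \<noteq> a} \<subseteq> {a. p a \<noteq> a} \<union> {a. q a \<noteq> a}"
    by auto
  ultimately show ?thesis
    unfolding perm_fin_def by (meson bij_comp finite_UnI finite_subset)
qed

lemma ex_fresh_name: "finite (A :: name set) \<Longrightarrow> \<exists>c. c \<notin> A"
  using ex_new_if_finite infinite_UNIV_nat by blast

section \<open>Permutation actions, support and abstraction\<close>

definition perm_action :: "'x set \<Rightarrow> 'x action \<Rightarrow> bool" where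
  "perm_action X act \<longleftrightarrow>
     (\<forall>x\<in>X. act id x = x) \<and>
     (\<forall>p q x. perm_fin p \<and> perm_fin q \<and> x \<in> X \<longrightarrow> act (p \<circ> q) x = act p (act q x)) \<and>
     (\<forall>p x. perm_fin p \<and> x \<in> X \<longrightarrow> act p x \<in> X)"

lemma perm_action_id: "perm_action X act \<Longrightarrow> x \<in> X \<Longrightarrow> act id x = x"
  unfolding perm_action_def by blast

lemma perm_action_comp:
  "perm_action X act \<Longrightarrow> perm_fin p \<Longrightarrow> perm_fin q \<Longrightarrow> x \<in> X \<Longrightarrow>
     act (p \<circ> q) x = act p (act q x)"
  unfolding perm_action_def by blast

lemma perm_action_closed: "perm_action X act \<Longrightarrow> perm_fin p \<Longrightarrow> x \<in> X \<Longrightarrow> act p x \<in> X"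
  unfolding perm_action_def by blast

lemma perm_action_swap_swap:
  "perm_action X act \<Longrightarrow> x \<in> X \<Longrightarrow> act (nswap a b) (act (nswap a b) x) = x"
  using perm_action_comp[of X act "nswap a b" "nswap a b" x] perm_action_id[of X act x] by simp

lemma nominal_perm_action: "nominal X act \<Longrightarrow> perm_action X act"
  unfolding nominal_def perm_action_def by blast

lemma perm_action_setact:
  assumes act: "perm_action X act"
  shows "perm_action (Pow X) (setact act)"
  unfolding perm_action_def setact_def
proof (intro conjI allI impI ballI)
  fix S assume "S \<in> Pow X"
  then have "\<forall>x\<in>S. act id x = x"
    using perm_action_id[OF act] by blast
  then show "act id ` S = S"
    by simp
next
  fix p q S assume "perm_fin p \<and> perm_fin q \<and> S \<in> Pow X"
  then have "\<forall>x\<in>S. act (p \<circ> q) x = act p (act q x)"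
    using perm_action_comp[OF act] by blast
  then show "act (p \<circ> q) ` S = act p ` act q ` S"
    by (simp add: image_image)
next
  fix p S assume "perm_fin p \<and> S \<in> Pow X"
  then show "act p ` S \<in> Pow X"
    using perm_action_closed[OF act] by blast
qed

lemma supp_subset: "finite T \<Longrightarrow> supports act T x \<Longrightarrow> supp act x \<subseteq> T"
  unfolding supp_def by blast

lemma finite_supp: "finite T \<Longrightarrow> supports act T x \<Longrightarrow> finite (supp act x)"
  using supp_subset finite_subset by metis

lemma nominal_finite_supp: "nominal X act \<Longrightarrow> x \<in> X \<Longrightarrow> finite (supp act x)"
  unfolding nominal_def by (metis finite_supp)

lemma fresh_SOME: "finite (supp act x) \<Longrightarrow> (SOME a. fresh act a x) \<notin> supp act x"
  using someI_ex[of "\<lambda>a. fresh act a x"] ex_fresh_name[of "supp act x"]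
  unfolding fresh_def by simp

lemma swap_fresh_eq:
  assumes act: "perm_action X act" and x: "x \<in> X"
    and a: "a \<notin> supp act x" and b: "b \<notin> supp act x"
  shows "act (nswap a b) x = x"
proof (cases "a = b")
  case True
  then show ?thesis using perm_action_id[OF act x] by simp
next
  case False
  obtain Sa where Sa: "finite Sa" "supports act Sa x" "a \<notin> Sa"
    using a unfolding supp_def by blast
  obtain Sb where Sb: "finite Sb" "supports act Sb x" "b \<notin> Sb"
    using b unfolding supp_def by blast
  obtain c where c: "c \<notin> Sa \<union> Sb \<union> {a, b}"
    using ex_fresh_name[of "Sa \<union> Sb \<union> {a, b}"] Sa Sb by blast
  have fix_ac: "act (nswap a c) x = x"
    using Sa(2,3) c unfolding supports_def by (metis UnCI nswap_other perm_fin_nswap)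
  have fix_bc: "act (nswap b c) x = x"
    using Sb(2,3) c unfolding supports_def by (metis UnCI nswap_other perm_fin_nswap)
  have "nswap a b = nswap a c \<circ> (nswap b c \<circ> nswap a c)"
    using False c by (auto simp: nswap_def fun_eq_iff)
  then have "act (nswap a b) x = act (nswap a c) (act (nswap b c) (act (nswap a c) x))"
    using act x by (simp add: perm_action_comp perm_action_closed)
  then show ?thesis
    using fix_ac fix_bc by simp
qed

lemma swap_via_fresh:
  assumes act: "perm_action X act" and x: "x \<in> X"
    and c: "c \<notin> supp act x" and e: "e \<notin> supp act x" and "d \<noteq> c" "d \<noteq> e" "c \<noteq> e"
  shows "act (nswap d e) x = act (nswap c e) (act (nswap d c) x)"
proof -
  have "nswap d e = nswap c e \<circ> (nswap d c \<circ> nswap c e)"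
    using assms(5-7) by (auto simp: nswap_def fun_eq_iff)
  then have "act (nswap d e) x = act (nswap c e) (act (nswap d c) (act (nswap c e) x))"
    using act x by (simp add: perm_action_comp perm_action_closed)
  then show ?thesis
    using swap_fresh_eq[OF act x c e] by simp
qed

lemma supports_swap:
  assumes act: "perm_action X act" and x: "x \<in> X" and T: "supports act T x"
  shows "supports act (nswap a b ` T) (act (nswap a b) x)"
  unfolding supports_def
proof (intro allI impI)
  fix r assume r: "perm_fin r \<and> (\<forall>y\<in>nswap a b ` T. r y = y)"
  define r' where "r' = nswap a b \<circ> r \<circ> nswap a b"
  have r': "perm_fin r'"
    unfolding r'_def using r by simp
  have "\<forall>y\<in>T. r' y = y"
    unfolding r'_def using r by auto
  then have fix_r': "act r' x = x"
    using T r' unfolding supports_def by blast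
  have "r \<circ> nswap a b = nswap a b \<circ> r'"
    unfolding r'_def by (auto simp: fun_eq_iff)
  then have "act r (act (nswap a b) x) = act (nswap a b) (act r' x)"
    using perm_action_comp[OF act _ _ x, of r "nswap a b"]
      perm_action_comp[OF act _ r' x, of "nswap a b"] r by simp
  then show "act r (act (nswap a b) x) = act (nswap a b) x"
    using fix_r' by simp
qed

lemma abs_rel_iff:
  "abs_rel act (a, x) (b, y) \<longleftrightarrow>
     (\<exists>c. c \<noteq> a \<and> c \<noteq> b \<and> fresh act c x \<and> fresh act c y \<and>
          act (nswap a c) x = act (nswap b c) y)"
  unfolding abs_rel_def by simp

lemma abs_rel_swap_eq:
  assumes act: "perm_action X act" and x: "x \<in> X" and y: "y \<in> X"
    and xy: "abs_rel act (a, x) (b, y)"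
    and e: "e \<notin> supp act x" "e \<notin> supp act y" "e \<noteq> a" "e \<noteq> b"
  shows "act (nswap a e) x = act (nswap b e) y"
proof -
  obtain c where c: "c \<noteq> a" "c \<noteq> b" "c \<notin> supp act x" "c \<notin> supp act y"
    "act (nswap a c) x = act (nswap b c) y"
    using xy unfolding abs_rel_iff fresh_def by blast
  show ?thesis
  proof (cases "e = c")
    case True
    then show ?thesis using c by simp
  next
    case False
    have "act (nswap a e) x = act (nswap c e) (act (nswap a c) x)"
      using swap_via_fresh[OF act x c(3) e(1)] c e False by simp
    moreover have "act (nswap b e) y = act (nswap c e) (act (nswap b c) y)"
      using swap_via_fresh[OF act y c(4) e(2)] c e False by simp
    ultimately show ?thesis
      using c(5) by simp
  qed
qed

lemma abs_rel_finite_supp: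
  assumes act: "perm_action X act" and x: "x \<in> X" and y: "y \<in> X"
    and xy: "abs_rel act (a, x) (b, y)" and T: "finite T" "supports act T y"
  shows "finite (supp act x)"
proof -
  obtain c where "act (nswap a c) x = act (nswap b c) y"
    using xy unfolding abs_rel_iff by blast
  then have "act (nswap a c) (act (nswap b c) y) = x"
    using perm_action_swap_swap[OF act x, of a c] by simp
  moreover have "supports act (nswap a c ` nswap b c ` T) (act (nswap a c) (act (nswap b c) y))"
    using supports_swap[OF act _ supports_swap[OF act y T(2)]] perm_action_closed[OF act _ y]
    by simp
  moreover have "finite (nswap a c ` nswap b c ` T)"
    using T(1) by simp
  ultimately show ?thesis
    using finite_supp by metis
qed

lemma abs_rel_rename:
  assumes "nominal X act" and x: "x \<in> X" and b: "b \<notin> supp act x"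
  shows "abs_rel act (a, x) (b, act (nswap a b) x)"
proof (cases "a = b")
  case True
  obtain c where "c \<notin> supp act x \<union> {a}"
    using ex_fresh_name[of "supp act x \<union> {a}"] nominal_finite_supp[OF assms(1) x] by blast
  moreover have "act id x = x"
    using nominal_perm_action[OF assms(1)] x by (rule perm_action_id)
  ultimately show ?thesis
    using True unfolding abs_rel_iff fresh_def by auto
next
  case False
  have act: "perm_action X act"
    using assms(1) by (rule nominal_perm_action)
  define y where "y = act (nswap a b) x"
  have y: "y \<in> X"
    unfolding y_def using perm_action_closed[OF act _ x] by simp
  obtain c where c: "c \<notin> supp act x \<union> supp act y \<union> {a, b}"
    using ex_fresh_name[of "supp act x \<union> supp act y \<union> {a, b}"]
      nominal_finite_supp[OF assms(1)] x y by blast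
  have "act (nswap a c) x = act (nswap b c) y"
    unfolding y_def by (rule swap_via_fresh[OF act x]) (use False b c in auto)
  then show ?thesis
    unfolding y_def[symmetric] abs_rel_iff fresh_def using c by blast
qed

lemma abs_cl_refl: "x \<in> X \<Longrightarrow> finite (supp act x) \<Longrightarrow> (a, x) \<in> abs_cl X act a x"
proof -
  assume x: "x \<in> X" and "finite (supp act x)"
  then obtain c where "c \<notin> supp act x \<union> {a}"
    using ex_fresh_name[of "supp act x \<union> {a}"] by blast
  then have "abs_rel act (a, x) (a, x)"
    unfolding abs_rel_iff fresh_def by blast
  then show ?thesis
    using x by (simp add: abs_cl_def)
qed

lemma abs_cl_inject:
  assumes nom: "nominal X act" and x: "x \<in> X" and y: "y \<in> X"
    and eq: "abs_cl X act a x = abs_cl X act a y"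
  shows "x = y"
proof -
  have act: "perm_action X act"
    using nom by (rule nominal_perm_action)
  have "(a, y) \<in> abs_cl X act a x"
    using abs_cl_refl[OF y nominal_finite_supp[OF nom y]] eq by simp
  then have xy: "abs_rel act (a, x) (a, y)"
    unfolding abs_cl_def by simp
  obtain e where e: "e \<notin> supp act x \<union> supp act y \<union> {a}"
    using ex_fresh_name[of "supp act x \<union> supp act y \<union> {a}"]
      nominal_finite_supp[OF nom] x y by blast
  have "act (nswap a e) x = act (nswap a e) y"
    by (rule abs_rel_swap_eq[OF act x y xy]) (use e in auto)
  then have "act (nswap a e) (act (nswap a e) x) = act (nswap a e) (act (nswap a e) y)"
    by simp
  then show "x = y"
    by (simp only: perm_action_swap_swap[OF act x] perm_action_swap_swap[OF act y])
qed

lemma Pufs_finite: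
  assumes "nominal X act" "finite S" "S \<subseteq> X"
  shows "S \<in> Pufs X act"
  unfolding Pufs_def using assms nominal_finite_supp[OF assms(1)] by auto

lemma setact_finite_supp:
  assumes nom: "nominal X act" and S: "finite S" "S \<subseteq> X"
  shows "finite (supp (setact act) S)"
proof -
  have "\<forall>x\<in>S. \<exists>T. finite T \<and> supports act T x"
    using nom S(2) unfolding nominal_def by blast
  then obtain T where T: "\<forall>x\<in>S. finite (T x) \<and> supports act (T x) x"
    by (rule bchoice[elim_format]) blast
  have "supports (setact act) (\<Union>(T ` S)) S"
    unfolding supports_def setact_def
  proof (intro allI impI)
    fix p assume p: "perm_fin p \<and> (\<forall>a\<in>\<Union>(T ` S). p a = a)"
    then have "\<forall>x\<in>S. act p x = x"
      using T unfolding supports_def by blast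
    then show "act p ` S = S"
      by simp
  qed
  moreover have "finite (\<Union>(T ` S))"
    using S(1) T by simp
  ultimately show ?thesis
    by (rule finite_supp[rotated])
qed

section \<open>Bar strings and \<open>\<alpha>\<close>-equivalence\<close>

fun letter_name :: "bletter \<Rightarrow> name" where
  "letter_name (Plain a) = a"
| "letter_name (Bar a) = a"

definition names :: "bletter list \<Rightarrow> name set" where
  "names w = letter_name ` set w"

lemma names_simps [simp]:
  "names [] = {}"
  "names (l # w) = insert (letter_name l) (names w)"
  by (simp_all add: names_def)

lemma finite_names [simp]: "finite (names w)"
  by (simp add: names_def)

lemma bperm_simps [simp]: "bperm p (Plain a) = Plain (p a)" "bperm p (Bar a) = Bar (p a)"
  by (simp_all add: bperm_def)

lemma letter_name_bperm [simp]: "letter_name (bperm p l) = p (letter_name l)"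
  by (cases l) simp_all

lemma wperm_simps [simp]:
  "wperm p [] = []"
  "wperm p (l # w) = bperm p l # wperm p w"
  "length (wperm p w) = length w"
  by (simp_all add: wperm_def)

lemma names_wperm [simp]: "names (wperm p w) = p ` names w"
  by (induction w) auto

lemma wperm_comp: "wperm (p \<circ> q) w = wperm p (wperm q w)"
  by (induction w) (auto simp: bperm_def split: bletter.splits)

lemma wperm_id [simp]: "wperm id w = w"
  by (induction w) (auto simp: bperm_def split: bletter.splits)

lemma wperm_cong: "(\<And>a. a \<in> names w \<Longrightarrow> p a = p' a) \<Longrightarrow> wperm p w = wperm p' w"
  by (induction w) (auto simp: bperm_def split: bletter.splits)

lemma wperm_swap_swap [simp]: "wperm (nswap a b) (wperm (nswap a b) w) = w"
  by (simp add: wperm_comp[symmetric])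

lemma perm_action_wperm: "perm_action UNIV wperm"
  unfolding perm_action_def by (simp add: wperm_comp)

lemma perm_action_clsperm: "perm_action UNIV clsperm"
  using perm_action_setact[OF perm_action_wperm] by (simp add: clsperm_def)

lemma perm_action_langperm: "perm_action UNIV langperm"
  using perm_action_setact[OF perm_action_clsperm] by (simp add: langperm_def)

lemma supp_wperm: "supp wperm w = names w"
proof
  have "supports wperm (names w) w"
    unfolding supports_def by (auto intro: wperm_cong[where p'=id, simplified])
  then show "supp wperm w \<subseteq> names w"
    by (simp add: supp_subset)
next
  show "names w \<subseteq> supp wperm w"
  proof
    fix a assume a: "a \<in> names w"
    show "a \<in> supp wperm w"
      unfolding supp_def
    proof (rule InterI, clarify)
      fix T assume T: "finite T" "supports wperm T w"
      show "a \<in> T"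
      proof (rule ccontr)
        assume "a \<notin> T"
        obtain c where c: "c \<notin> T \<union> names w"
          using ex_fresh_name[of "T \<union> names w"] T(1) by auto
        then have "wperm (nswap a c) w = w"
          using T(2) \<open>a \<notin> T\<close> unfolding supports_def by (metis UnCI nswap_other perm_fin_nswap)
        moreover have "c \<in> names (wperm (nswap a c) w)"
          using a by (metis image_eqI names_wperm nswap_left)
        ultimately show False
          using c by simp
      qed
    qed
  qed
qed

lemma fresh_wperm: "fresh wperm b v \<longleftrightarrow> b \<notin> names v"
  by (simp add: fresh_def supp_wperm)

lemma alpha_step_wperm:
  assumes p: "inj p" and step: "alpha_step u u'"
  shows "alpha_step (wperm p u) (wperm p u')"
proof -
  obtain x a v b w where u: "u = x @ Bar a # v" "u' = x @ Bar b # w"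
    and vw: "(a = b \<and> v = w) \<or> (fresh wperm b v \<and> wperm (nswap a b) v = w)"
    using step unfolding alpha_step_def by blast
  have "wperm (nswap (p a) (p b)) (wperm p v) = wperm p (wperm (nswap a b) v)"
    unfolding wperm_comp[symmetric] by (rule wperm_cong) (simp add: nswap_conj[OF p])
  then have "(p a = p b \<and> wperm p v = wperm p w) \<or>
      (fresh wperm (p b) (wperm p v) \<and> wperm (nswap (p a) (p b)) (wperm p v) = wperm p w)"
    using vw p by (auto simp: fresh_wperm inj_image_mem_iff)
  moreover have "wperm p u = wperm p x @ Bar (p a) # wperm p v"
    and "wperm p u' = wperm p x @ Bar (p b) # wperm p w"
    by (simp_all add: u wperm_def)
  ultimately show ?thesis
    unfolding alpha_step_def by blast
qed

lemma equivclp_map: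
  assumes "\<And>u u'. r u u' \<Longrightarrow> r (f u) (f u')" and "equivclp r u u'"
  shows "equivclp r (f u) (f u')"
  using assms(2)
proof (induction rule: equivclp_induct)
  case base
  then show ?case by simp
next
  case (step y z)
  then show ?case using assms(1) equivclp_into_equivclp by metis
qed

lemma alpha_eq_refl [simp]: "alpha_eq u u"
  by (simp add: alpha_eq_def)

lemma alpha_eq_sym: "alpha_eq u v \<Longrightarrow> alpha_eq v u"
  unfolding alpha_eq_def by (rule equivclp_sym)

lemma alpha_eq_trans: "alpha_eq u v \<Longrightarrow> alpha_eq v w \<Longrightarrow> alpha_eq u w"
  unfolding alpha_eq_def by (rule equivclp_trans)

lemma alpha_eq_wperm: "inj p \<Longrightarrow> alpha_eq u u' \<Longrightarrow> alpha_eq (wperm p u) (wperm p u')"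
  unfolding alpha_eq_def by (rule equivclp_map[where r = alpha_step]) (simp add: alpha_step_wperm)

lemma alpha_eq_Cons: "alpha_eq u u' \<Longrightarrow> alpha_eq (l # u) (l # u')"
proof -
  have "alpha_step u u' \<Longrightarrow> alpha_step (l # u) (l # u')" for u u'
    unfolding alpha_step_def by (metis append_Cons)
  then show "alpha_eq u u' \<Longrightarrow> alpha_eq (l # u) (l # u')"
    unfolding alpha_eq_def by (rule equivclp_map)
qed

lemma alpha_eq_Bar_rename: "e \<notin> names w \<Longrightarrow> alpha_eq (Bar b # w) (Bar e # wperm (nswap b e) w)"
  unfolding alpha_eq_def alpha_step_def
  by (rule r_into_equivclp, rule exI[of _ "[]"]) (auto simp: fresh_wperm)

text \<open>Inversion principle for \<open>\<alpha>\<close>-equivalence: an equivalence containing alpha_step,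
  hence containing alpha_eq.\<close>

definition alpha_head :: "bletter list \<Rightarrow> bletter list \<Rightarrow> bool" where
  "alpha_head u u' \<longleftrightarrow> (u = [] \<and> u' = []) \<or>
     (\<exists>a x x'. u = Plain a # x \<and> u' = Plain a # x' \<and> alpha_eq x x') \<or>
     (\<exists>a x b x'. u = Bar a # x \<and> u' = Bar b # x' \<and>
        (\<forall>e. e \<notin> names x \<and> e \<notin> names x' \<and> e \<noteq> a \<and> e \<noteq> b \<longrightarrow>
             alpha_eq (wperm (nswap a e) x) (wperm (nswap b e) x')))"

lemma alpha_head_refl: "alpha_head u u"
proof (cases u)
  case Nil
  then show ?thesis by (simp add: alpha_head_def)
next
  case (Cons l x)
  then show ?thesis by (cases l) (auto simp: alpha_head_def)
qed

lemma alpha_head_sym: "alpha_head u u' \<Longrightarrow> alpha_head u' u"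
  unfolding alpha_head_def by (blast intro: alpha_eq_sym)

lemma wperm_swap_fresh_swap:
  assumes "e \<notin> names x" "f \<notin> names x" "f \<noteq> a" "e \<noteq> f"
  shows "wperm (nswap e f) (wperm (nswap a f) x) = wperm (nswap a e) x"
  unfolding wperm_comp[symmetric]
  by (rule wperm_cong) (use assms in \<open>auto simp: nswap_def\<close>)

lemma alpha_head_trans:
  assumes "alpha_head u u'" "alpha_head u' u''"
  shows "alpha_head u u''"
proof -
  consider "u = [] \<and> u' = []"
    | (Plain) a x x' where "u = Plain a # x" "u' = Plain a # x'" "alpha_eq x x'"
    | (Bar) a x b x' where "u = Bar a # x" "u' = Bar b # x'"
        "\<forall>e. e \<notin> names x \<and> e \<notin> names x' \<and> e \<noteq> a \<and> e \<noteq> b \<longrightarrow>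
             alpha_eq (wperm (nswap a e) x) (wperm (nswap b e) x')"
    using assms(1) unfolding alpha_head_def by blast
  then show ?thesis
  proof cases
    case 1
    then show ?thesis using assms(2) by (simp add: alpha_head_def)
  next
    case Plain
    then show ?thesis using assms(2) unfolding alpha_head_def by (auto intro: alpha_eq_trans)
  next
    case Bar
    from assms(2) Bar obtain c x'' where u'': "u'' = Bar c # x''"
      and x'x'': "\<forall>e. e \<notin> names x' \<and> e \<notin> names x'' \<and> e \<noteq> b \<and> e \<noteq> c \<longrightarrow>
             alpha_eq (wperm (nswap b e) x') (wperm (nswap c e) x'')"
      unfolding alpha_head_def by auto
    have "alpha_eq (wperm (nswap a e) x) (wperm (nswap c e) x'')"
      if e: "e \<notin> names x" "e \<notin> names x''" "e \<noteq> a" "e \<noteq> c" for e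
    proof -
      obtain f where f: "f \<notin> names x \<union> names x' \<union> names x'' \<union> {a, b, c, e}"
        using ex_fresh_name[of "names x \<union> names x' \<union> names x'' \<union> {a, b, c, e}"] by auto
      have "alpha_eq (wperm (nswap a f) x) (wperm (nswap c f) x'')"
        using Bar(3) x'x'' f by (blast intro: alpha_eq_trans)
      then have "alpha_eq (wperm (nswap e f) (wperm (nswap a f) x))
          (wperm (nswap e f) (wperm (nswap c f) x''))"
        by (rule alpha_eq_wperm[OF inj_nswap])
      then show ?thesis
        using wperm_swap_fresh_swap[of e x f a] wperm_swap_fresh_swap[of e x'' f c] e f by auto
    qed
    then show ?thesis
      using Bar u'' unfolding alpha_head_def by blast
  qed
qed

lemma alpha_head_step:
  assumes "alpha_step u u'"
  shows "alpha_head u u'"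
proof -
  obtain x a v b w where u: "u = x @ Bar a # v" "u' = x @ Bar b # w"
    and vw: "(a = b \<and> v = w) \<or> (fresh wperm b v \<and> wperm (nswap a b) v = w)"
    using assms unfolding alpha_step_def by blast
  show ?thesis
  proof (cases x)
    case Nil
    have "alpha_eq (wperm (nswap a e) v) (wperm (nswap b e) w)"
      if e: "e \<notin> names v" "e \<noteq> a" "e \<noteq> b" for e
      using vw
    proof
      assume "a = b \<and> v = w"
      then show ?thesis by simp
    next
      assume b: "fresh wperm b v \<and> wperm (nswap a b) v = w"
      have "wperm (nswap a e) v = wperm (nswap b e) (wperm (nswap a b) v)"
        unfolding wperm_comp[symmetric]
        by (rule wperm_cong) (use b e in \<open>auto simp: nswap_def fresh_wperm\<close>)
      then show ?thesis
        using b by simp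
    qed
    then show ?thesis
      using u Nil unfolding alpha_head_def by auto
  next
    case (Cons l x0)
    have "alpha_step (x0 @ Bar a # v) (x0 @ Bar b # w)"
      unfolding alpha_step_def using vw by blast
    then have tail: "alpha_eq (x0 @ Bar a # v) (x0 @ Bar b # w)"
      by (simp add: alpha_eq_def r_into_equivclp)
    show ?thesis
    proof (cases l)
      case (Plain d)
      then show ?thesis using u Cons tail unfolding alpha_head_def by auto
    next
      case (Bar d)
      then show ?thesis
        using u Cons alpha_eq_wperm[OF inj_nswap tail] unfolding alpha_head_def by auto
    qed
  qed
qed

lemma alpha_eq_imp_alpha_head: "alpha_eq u u' \<Longrightarrow> alpha_head u u'"
  unfolding alpha_eq_def
proof (induction rule: equivclp_induct)
  case base
  then show ?case by (rule alpha_head_refl)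
next
  case (step y z)
  then have "alpha_head y z"
    using alpha_head_step alpha_head_sym by blast
  then show ?case
    using step alpha_head_trans by blast
qed

lemma alpha_eq_NilD: "alpha_eq [] w \<Longrightarrow> w = []"
  using alpha_eq_imp_alpha_head unfolding alpha_head_def by blast

lemma alpha_eq_PlainD: "alpha_eq (Plain a # x) w \<Longrightarrow> \<exists>x'. w = Plain a # x' \<and> alpha_eq x x'"
  using alpha_eq_imp_alpha_head unfolding alpha_head_def by blast

lemma alpha_eq_BarD:
  "alpha_eq (Bar a # x) w \<Longrightarrow> \<exists>b x'. w = Bar b # x' \<and>
     (\<forall>e. e \<notin> names x \<and> e \<notin> names x' \<and> e \<noteq> a \<and> e \<noteq> b \<longrightarrow>
          alpha_eq (wperm (nswap a e) x) (wperm (nswap b e) x'))"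
  using alpha_eq_imp_alpha_head unfolding alpha_head_def by blast

section \<open>Classes of bar strings and bar languages\<close>

lemma acls_eq_iff: "acls u = acls v \<longleftrightarrow> alpha_eq u v"
proof
  assume "acls u = acls v"
  then have "v \<in> acls u"
    by (simp add: acls_def)
  then show "alpha_eq u v"
    by (simp add: acls_def)
next
  assume "alpha_eq u v"
  then show "acls u = acls v"
    unfolding acls_def by (auto intro: alpha_eq_trans alpha_eq_sym)
qed

lemma acls_Cons_cong: "acls u = acls v \<Longrightarrow> acls (l # u) = acls (l # v)"
  by (simp add: acls_eq_iff alpha_eq_Cons)

lemma acls_Bar_rename: "e \<notin> names w \<Longrightarrow> acls (Bar b # w) = acls (Bar e # wperm (nswap b e) w)"
  by (simp add: acls_eq_iff alpha_eq_Bar_rename)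

lemma clsperm_acls: "clsperm (nswap a b) (acls w) = acls (wperm (nswap a b) w)"
proof -
  have "wperm (nswap a b) ` acls w = acls (wperm (nswap a b) w)"
  proof
    show "wperm (nswap a b) ` acls w \<subseteq> acls (wperm (nswap a b) w)"
      unfolding acls_def using alpha_eq_wperm[OF inj_nswap] by blast
  next
    show "acls (wperm (nswap a b) w) \<subseteq> wperm (nswap a b) ` acls w"
    proof
      fix v assume "v \<in> acls (wperm (nswap a b) w)"
      then have "alpha_eq (wperm (nswap a b) (wperm (nswap a b) w)) (wperm (nswap a b) v)"
        unfolding acls_def using alpha_eq_wperm[OF inj_nswap] by blast
      then have "wperm (nswap a b) v \<in> acls w"
        by (simp add: acls_def)
      then show "v \<in> wperm (nswap a b) ` acls w"
        by (rule image_eqI[rotated]) simp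
    qed
  qed
  then show ?thesis
    by (simp add: clsperm_def setact_def)
qed

lemma acls_mem_langperm_iff:
  "acls (wperm (nswap a b) w) \<in> langperm (nswap a b) L \<longleftrightarrow> acls w \<in> L"
proof -
  have "inj (clsperm (nswap a b))"
    by (rule inj_on_inverseI[where g = "clsperm (nswap a b)"])
      (rule perm_action_swap_swap[OF perm_action_clsperm UNIV_I])
  then have "clsperm (nswap a b) (acls w) \<in> clsperm (nswap a b) ` L \<longleftrightarrow> acls w \<in> L"
    by (rule inj_image_mem_iff)
  then show ?thesis
    by (simp only: langperm_def setact_def clsperm_acls)
qed

lemma acls_mem_derivative_iff: "acls w \<in> {acls u | u. acls (l # u) \<in> L} \<longleftrightarrow> acls (l # w) \<in> L"
proof
  assume "acls w \<in> {acls u | u. acls (l # u) \<in> L}"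
  then obtain u where "acls w = acls u" "acls (l # u) \<in> L"
    by blast
  then show "acls (l # w) \<in> L"
    using acls_Cons_cong[of w u l] by simp
qed blast

lemma Term_subset_range_acls: "L \<in> Term \<Longrightarrow> L \<subseteq> range acls"
  by (simp add: Term_def Pfs_def)

lemma Term_supports: "L \<in> Term \<Longrightarrow> \<exists>T. finite T \<and> supports langperm T L"
  unfolding Term_def Pfs_def langperm_def by blast

lemma Term_finite_supp: "L \<in> Term \<Longrightarrow> finite (supp langperm L)"
  using Term_supports finite_supp by metis

lemma accepts_Nil_iff: "accepts R F q [] \<longleftrightarrow> q \<in> F"
  by (auto elim: accepts.cases intro: accepts.intros)

lemma accepts_Cons_iff: "accepts R F q (l # w) \<longleftrightarrow> (\<exists>q'. (q, l, q') \<in> R \<and> accepts R F q' w)"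
  by (auto elim: accepts.cases intro: accepts.intros)

lemma acls_mem_bar_lang_iff:
  "acls w \<in> bar_lang R F q \<longleftrightarrow> (\<exists>w'. alpha_eq w w' \<and> accepts R F q w')"
proof -
  have "acls w \<in> bar_lang R F q \<longleftrightarrow> (\<exists>w'. acls w = acls w' \<and> accepts R F q w')"
    unfolding bar_lang_def by blast
  then show ?thesis
    by (simp only: acls_eq_iff)
qed

lemma Nil_mem_bar_lang_iff: "acls [] \<in> bar_lang R F q \<longleftrightarrow> q \<in> F"
proof
  assume "acls [] \<in> bar_lang R F q"
  then obtain w' where w': "alpha_eq [] w'" "accepts R F q w'"
    unfolding acls_mem_bar_lang_iff by blast
  then have "accepts R F q []"
    using alpha_eq_NilD[OF w'(1)] by simp
  then show "q \<in> F"
    by (simp add: accepts_Nil_iff)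
next
  assume "q \<in> F"
  then have "accepts R F q []"
    by (simp add: accepts_Nil_iff)
  then show "acls [] \<in> bar_lang R F q"
    unfolding bar_lang_def by blast
qed

lemma Cons_mem_bar_langI:
  "(q, l, q') \<in> R \<Longrightarrow> acls w \<in> bar_lang R F q' \<Longrightarrow> acls (l # w) \<in> bar_lang R F q"
proof -
  assume "(q, l, q') \<in> R" "acls w \<in> bar_lang R F q'"
  then obtain w' where "alpha_eq w w'" "(q, l, q') \<in> R" "accepts R F q' w'"
    unfolding acls_mem_bar_lang_iff by blast
  then have "alpha_eq (l # w) (l # w')" "accepts R F q (l # w')"
    by (simp_all add: alpha_eq_Cons accepts.acc_cons)
  then show ?thesis
    unfolding acls_mem_bar_lang_iff by blast
qed

lemma Plain_mem_bar_lang_iff: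
  "acls (Plain a # w) \<in> bar_lang R F q \<longleftrightarrow> (\<exists>q'. (q, Plain a, q') \<in> R \<and> acls w \<in> bar_lang R F q')"
proof
  assume "acls (Plain a # w) \<in> bar_lang R F q"
  then obtain w' where w': "alpha_eq (Plain a # w) w'" "accepts R F q w'"
    unfolding acls_mem_bar_lang_iff by blast
  then obtain x' where x': "w' = Plain a # x'" "alpha_eq w x'"
    using alpha_eq_PlainD by blast
  then obtain q' where "(q, Plain a, q') \<in> R" "accepts R F q' x'"
    using w'(2) unfolding x'(1) accepts_Cons_iff by blast
  then show "\<exists>q'. (q, Plain a, q') \<in> R \<and> acls w \<in> bar_lang R F q'"
    using x'(2) unfolding acls_mem_bar_lang_iff by blast
qed (blast intro: Cons_mem_bar_langI)

section \<open>RNNAs and their determinization\<close>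

locale rnna_automaton =
  fixes Q :: "'q set" and act :: "'q action" and R :: "('q \<times> bletter \<times> 'q) set"
    and F :: "'q set"
  assumes rnna: "rnna Q act R F"
begin

lemma nominal_Q: "nominal Q act"
  using rnna unfolding rnna_def by (elim conjE)

lemma perm_action_Q: "perm_action Q act"
  using nominal_Q by (rule nominal_perm_action)

lemma trans_in_Q:
  assumes "(q, l, q') \<in> R"
  shows "q \<in> Q" "q' \<in> Q"
  using assms rnna unfolding rnna_def by (elim conjE, blast)+

lemma trans_eqvt: "perm_fin p \<Longrightarrow> (q, l, q') \<in> R \<Longrightarrow> (act p q, bperm p l, act p q') \<in> R"
  using rnna unfolding rnna_def by (elim conjE) blast

lemma final_eqvt: "perm_fin p \<Longrightarrow> q \<in> F \<Longrightarrow> act p q \<in> F"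
  using rnna unfolding rnna_def by (elim conjE) blast

lemma Bar_trans_abs_rel:
  "(q, Bar a, q') \<in> R \<Longrightarrow> q'' \<in> Q \<Longrightarrow> abs_rel act (a, q') (b, q'') \<Longrightarrow> (q, Bar b, q'') \<in> R"
  using rnna unfolding rnna_def by (elim conjE) blast

lemma finite_Plain_trans: "q \<in> Q \<Longrightarrow> finite {(a, q'). (q, Plain a, q') \<in> R}"
  using rnna unfolding rnna_def by (elim conjE) blast

lemma finite_Bar_trans: "q \<in> Q \<Longrightarrow> finite {abs_cl Q act a q' | a q'. (q, Bar a, q') \<in> R}"
  using rnna unfolding rnna_def by (elim conjE) blast

lemma accepts_swap: "accepts R F q w \<Longrightarrow> accepts R F (act (nswap a b) q) (wperm (nswap a b) w)"
proof (induction rule: accepts.induct)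
  case (acc_nil q)
  then show ?case by (simp add: final_eqvt accepts.acc_nil)
next
  case (acc_cons q l q' w)
  then show ?case using trans_eqvt[of "nswap a b" q l q'] by (simp add: accepts.acc_cons)
qed

lemma finite_successors:
  assumes q: "q \<in> Q"
  shows "finite {q'. (q, l, q') \<in> R}"
proof (cases l)
  case (Plain a)
  have "{q'. (q, l, q') \<in> R} \<subseteq> snd ` {(a, q'). (q, Plain a, q') \<in> R}"
    using Plain by (auto simp: image_iff)
  then show ?thesis
    using finite_Plain_trans[OF q] finite_subset by blast
next
  case (Bar a)
  let ?A = "{q'. (q, l, q') \<in> R}"
  have "abs_cl Q act a ` ?A \<subseteq> {abs_cl Q act a q' | a q'. (q, Bar a, q') \<in> R}"
    using Bar by blast
  then have "finite (abs_cl Q act a ` ?A)"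
    using finite_Bar_trans[OF q] by (rule finite_subset)
  moreover have "inj_on (abs_cl Q act a) ?A"
  proof (rule inj_onI)
    fix x y assume "x \<in> ?A" "y \<in> ?A" "abs_cl Q act a x = abs_cl Q act a y"
    then show "x = y"
      using abs_cl_inject[OF nominal_Q] trans_in_Q(2) by simp
  qed
  ultimately show ?thesis
    by (rule finite_imageD)
qed

lemma succs_subset: "succs R l S \<subseteq> Q"
  unfolding succs_def using trans_in_Q(2) by blast

lemma finite_succs: "finite S \<Longrightarrow> S \<subseteq> Q \<Longrightarrow> finite (succs R l S)"
  unfolding succs_def by (auto intro: finite_successors)

lemma succs_swap:
  assumes S: "S \<subseteq> Q"
  shows "setact act (nswap a b) (succs R l S) =
    succs R (bperm (nswap a b) l) (setact act (nswap a b) S)"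
proof
  show "setact act (nswap a b) (succs R l S) \<subseteq> succs R (bperm (nswap a b) l) (setact act (nswap a b) S)"
    unfolding setact_def succs_def using trans_eqvt[OF perm_fin_nswap] by blast
next
  show "succs R (bperm (nswap a b) l) (setact act (nswap a b) S) \<subseteq> setact act (nswap a b) (succs R l S)"
  proof
    fix t assume "t \<in> succs R (bperm (nswap a b) l) (setact act (nswap a b) S)"
    then obtain s where s: "s \<in> S" "(act (nswap a b) s, bperm (nswap a b) l, t) \<in> R"
      unfolding setact_def succs_def by blast
    have "(act (nswap a b) (act (nswap a b) s), bperm (nswap a b) (bperm (nswap a b) l),
        act (nswap a b) t) \<in> R"
      using trans_eqvt[OF perm_fin_nswap s(2)] .
    moreover have "act (nswap a b) (act (nswap a b) s) = s"
      using s(1) S perm_action_swap_swap[OF perm_action_Q] by blast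
    moreover have "bperm (nswap a b) (bperm (nswap a b) l) = l"
      by (cases l) simp_all
    ultimately have "act (nswap a b) t \<in> succs R l S"
      unfolding succs_def using s(1) by auto
    moreover have "act (nswap a b) (act (nswap a b) t) = t"
      using perm_action_swap_swap[OF perm_action_Q trans_in_Q(2)[OF s(2)]] .
    ultimately show "t \<in> setact act (nswap a b) (succs R l S)"
      unfolding setact_def by (metis image_eqI)
  qed
qed

lemma Bar_mem_bar_lang_fresh:
  assumes w: "acls (Bar b # w) \<in> bar_lang R F q" and E: "finite E"
  obtains e q' where "e \<notin> E" "(q, Bar e, q') \<in> R" "acls (wperm (nswap b e) w) \<in> bar_lang R F q'"
proof -
  obtain w' where "alpha_eq (Bar b # w) w'" and acc: "accepts R F q w'"
    using w unfolding acls_mem_bar_lang_iff by blast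
  then obtain d v where w': "w' = Bar d # v"
    and wv: "\<forall>e. e \<notin> names w \<and> e \<notin> names v \<and> e \<noteq> b \<and> e \<noteq> d \<longrightarrow>
      alpha_eq (wperm (nswap b e) w) (wperm (nswap d e) v)"
    using alpha_eq_BarD by blast
  obtain q' where q': "(q, Bar d, q') \<in> R" "accepts R F q' v"
    using acc unfolding w' accepts_Cons_iff by blast
  have q'_Q: "q' \<in> Q"
    using trans_in_Q(2)[OF q'(1)] .
  obtain e where e: "e \<notin> E \<union> names w \<union> names v \<union> supp act q' \<union> {b, d}"
    using ex_fresh_name[of "E \<union> names w \<union> names v \<union> supp act q' \<union> {b, d}"]
      E nominal_finite_supp[OF nominal_Q q'_Q] by auto
  have "abs_rel act (d, q') (e, act (nswap d e) q')"
    using abs_rel_rename[OF nominal_Q q'_Q] e by blast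
  then have "(q, Bar e, act (nswap d e) q') \<in> R"
    using Bar_trans_abs_rel[OF q'(1)] perm_action_closed[OF perm_action_Q perm_fin_nswap q'_Q]
    by blast
  moreover have "acls (wperm (nswap b e) w) \<in> bar_lang R F (act (nswap d e) q')"
  proof -
    have "alpha_eq (wperm (nswap b e) w) (wperm (nswap d e) v)"
      using wv e by blast
    moreover have "accepts R F (act (nswap d e) q') (wperm (nswap d e) v)"
      using q'(2) by (rule accepts_swap)
    ultimately show ?thesis
      unfolding acls_mem_bar_lang_iff by blast
  qed
  ultimately show ?thesis
    using that e by blast
qed

end

locale rnna_det_hom = rnna_automaton +
  fixes h :: "'q set \<Rightarrow> bclass set"
  assumes hom: "G_hom (Pufs Q act) (setact act) (det Q act R F) Term langperm tau h"
begin

lemma h_in_Term: "S \<in> Pufs Q act \<Longrightarrow> h S \<in> Term"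
  using hom unfolding G_hom_def by blast

lemma h_swap: "S \<in> Pufs Q act \<Longrightarrow> h (setact act (nswap a b) S) = langperm (nswap a b) (h S)"
  using hom perm_fin_nswap unfolding G_hom_def equivariant_map_def by blast

lemma h_det: "S \<in> Pufs Q act \<Longrightarrow> Gmap Term langperm h (det Q act R F S) = tau (h S)"
  using hom unfolding G_hom_def by blast

lemma Nil_mem_h_iff: "S \<in> Pufs Q act \<Longrightarrow> acls [] \<in> h S \<longleftrightarrow> (\<exists>s\<in>S. s \<in> F)"
  using h_det by (simp add: Gmap_def det_def tau_def Let_def)

lemma Plain_mem_h_iff:
  assumes "S \<in> Pufs Q act"
  shows "acls (Plain a # w) \<in> h S \<longleftrightarrow> acls w \<in> h (succs R (Plain a) S)"
proof -
  have "h (succs R (Plain a) S) = {acls u | u. acls (Plain a # u) \<in> h S}"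
    using h_det[OF assms] by (simp add: Gmap_def det_def tau_def Let_def fun_eq_iff)
  then show ?thesis
    by (simp only: acls_mem_derivative_iff)
qed

lemma h_Bar_abs_rel:
  assumes S: "finite S" "S \<subseteq> Q"
  defines "a0 \<equiv> SOME a. fresh (setact act) a S" and "a1 \<equiv> SOME a. fresh langperm a (h S)"
  shows "abs_rel langperm (a1, {acls u | u. acls (Bar a1 # u) \<in> h S}) (a0, h (succs R (Bar a0) S))"
proof -
  let ?N = "succs R (Bar a0) S"
  have N: "finite ?N" "?N \<subseteq> Q"
    using finite_succs[OF S] succs_subset .
  have N_Pufs: "?N \<in> Pufs Q act"
    using Pufs_finite[OF nominal_Q N] .
  have "abs_map Term langperm h (abs_cl (Pufs Q act) (setact act) a0 ?N) =
      abs_cl Term langperm a1 {acls u | u. acls (Bar a1 # u) \<in> h S}"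
    using h_det[OF Pufs_finite[OF nominal_Q S]]
    by (simp add: Gmap_def det_def tau_def Let_def a0_def a1_def)
  moreover have "(a0, ?N) \<in> abs_cl (Pufs Q act) (setact act) a0 ?N"
    using N_Pufs setact_finite_supp[OF nominal_Q N] by (rule abs_cl_refl)
  moreover have "(a0, h ?N) \<in> abs_cl Term langperm a0 (h ?N)"
    using h_in_Term[OF N_Pufs] Term_finite_supp[OF h_in_Term[OF N_Pufs]] by (rule abs_cl_refl)
  ultimately have "(a0, h ?N) \<in> abs_cl Term langperm a1 {acls u | u. acls (Bar a1 # u) \<in> h S}"
    unfolding abs_map_def by blast
  then show ?thesis
    by (simp add: abs_cl_def)
qed

lemma Bar_mem_h_rename:
  fixes S :: "'q set" and a0 a1 :: name
  defines "M \<equiv> {acls u | u. acls (Bar a1 # u) \<in> h S}" and "N0 \<equiv> succs R (Bar a0) S"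
  assumes S: "finite S" "S \<subseteq> Q" and abs: "abs_rel langperm (a1, M) (a0, h N0)"
    and a0: "a0 \<notin> supp (setact act) S" and a1: "a1 \<notin> supp langperm (h S)"
    and e: "e \<notin> supp (setact act) S" "e \<notin> supp langperm (h S)" "e \<notin> supp langperm M"
      "e \<notin> supp langperm (h N0)" "e \<noteq> a0" "e \<noteq> a1"
  shows "acls (Bar e # v) \<in> h S \<longleftrightarrow> acls v \<in> h (succs R (Bar e) S)"
proof -
  have N0_Pufs: "N0 \<in> Pufs Q act"
    unfolding N0_def using Pufs_finite[OF nominal_Q finite_succs[OF S] succs_subset] .
  have "langperm (nswap a1 e) (h S) = h S"
    using swap_fresh_eq[OF perm_action_langperm UNIV_I a1 e(2)] .
  then have "acls (Bar e # v) \<in> h S \<longleftrightarrow> acls (Bar a1 # wperm (nswap a1 e) v) \<in> h S"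
    using acls_mem_langperm_iff[of a1 e "Bar e # v" "h S"] by simp
  also have "\<dots> \<longleftrightarrow> acls (wperm (nswap a1 e) v) \<in> M"
    unfolding M_def by (rule acls_mem_derivative_iff[symmetric])
  also have "\<dots> \<longleftrightarrow> acls v \<in> langperm (nswap a1 e) M"
    using acls_mem_langperm_iff[of a1 e "wperm (nswap a1 e) v" M] by simp
  also have "langperm (nswap a1 e) M = langperm (nswap a0 e) (h N0)"
    using abs_rel_swap_eq[OF perm_action_langperm UNIV_I UNIV_I abs e(3,4)] e(5,6) by simp
  also have "\<dots> = h (setact act (nswap a0 e) N0)"
    using h_swap[OF N0_Pufs] by simp
  also have "setact act (nswap a0 e) N0 = succs R (Bar e) S"
  proof -
    have "setact act (nswap a0 e) S = S"
      using swap_fresh_eq[OF perm_action_setact[OF perm_action_Q] _ a0 e(1)] S(2) by simp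
    then show ?thesis
      unfolding N0_def using succs_swap[OF S(2), of a0 e "Bar a0"] by simp
  qed
  finally show ?thesis .
qed

lemma Bar_mem_h_iff_fresh:
  assumes S: "finite S" "S \<subseteq> Q"
  obtains E where "finite E"
    and "\<And>e v. e \<notin> E \<Longrightarrow> acls (Bar e # v) \<in> h S \<longleftrightarrow> acls v \<in> h (succs R (Bar e) S)"
proof -
  define a0 where "a0 = (SOME a. fresh (setact act) a S)"
  define a1 where "a1 = (SOME a. fresh langperm a (h S))"
  define N0 where "N0 = succs R (Bar a0) S"
  define M where "M = {acls u | u. acls (Bar a1 # u) \<in> h S}"
  have hS: "h S \<in> Term"
    using h_in_Term[OF Pufs_finite[OF nominal_Q S]] .
  have hN0: "h N0 \<in> Term"
    unfolding N0_def using h_in_Term[OF Pufs_finite[OF nominal_Q finite_succs[OF S] succs_subset]] .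
  have abs: "abs_rel langperm (a1, M) (a0, h N0)"
    unfolding a0_def a1_def M_def N0_def using h_Bar_abs_rel[OF S] .
  have a0: "a0 \<notin> supp (setact act) S"
    unfolding a0_def using fresh_SOME setact_finite_supp[OF nominal_Q S] .
  have a1: "a1 \<notin> supp langperm (h S)"
    unfolding a1_def using fresh_SOME Term_finite_supp[OF hS] .
  have "finite (supp langperm M)"
    using Term_supports[OF hN0] abs_rel_finite_supp[OF perm_action_langperm UNIV_I UNIV_I abs]
    by blast
  define E where "E = supp (setact act) S \<union> supp langperm (h S) \<union> supp langperm M \<union>
    supp langperm (h N0) \<union> {a0, a1}"
  have "finite E"
    unfolding E_def using \<open>finite (supp langperm M)\<close> setact_finite_supp[OF nominal_Q S]
      Term_finite_supp[OF hS] Term_finite_supp[OF hN0] by simp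
  moreover have "acls (Bar e # v) \<in> h S \<longleftrightarrow> acls v \<in> h (succs R (Bar e) S)" if "e \<notin> E" for e v
    using Bar_mem_h_rename[OF S abs[unfolded M_def N0_def] a0 a1] \<open>e \<notin> E\<close>
    unfolding E_def M_def N0_def by simp
  ultimately show ?thesis
    using that by blast
qed

lemma Bar_mem_h_iff_bar_lang:
  assumes S: "finite S" "S \<subseteq> Q"
    and IH: "\<And>e. acls (wperm (nswap b e) w) \<in> h (succs R (Bar e) S) \<longleftrightarrow>
      (\<exists>s\<in>succs R (Bar e) S. acls (wperm (nswap b e) w) \<in> bar_lang R F s)"
  shows "acls (Bar b # w) \<in> h S \<longleftrightarrow> (\<exists>s\<in>S. acls (Bar b # w) \<in> bar_lang R F s)"
proof -
  obtain E where "finite E"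
    and h_Bar: "\<And>e v. e \<notin> E \<Longrightarrow> acls (Bar e # v) \<in> h S \<longleftrightarrow> acls v \<in> h (succs R (Bar e) S)"
    using Bar_mem_h_iff_fresh[OF S] by blast
  then have E: "finite (E \<union> names w)"
    by simp
  have rename: "acls (Bar b # w) = acls (Bar e # wperm (nswap b e) w)" if "e \<notin> E \<union> names w" for e
    using that by (simp add: acls_Bar_rename)
  have via_fresh: "acls (Bar b # w) \<in> h S \<longleftrightarrow>
      (\<exists>s\<in>S. \<exists>s'. (s, Bar e, s') \<in> R \<and> acls (wperm (nswap b e) w) \<in> bar_lang R F s')"
    if e: "e \<notin> E \<union> names w" for e
  proof -
    have "acls (Bar b # w) \<in> h S \<longleftrightarrow> acls (wperm (nswap b e) w) \<in> h (succs R (Bar e) S)"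
      using h_Bar e rename[OF e] by simp
    also have "\<dots> \<longleftrightarrow> (\<exists>s\<in>succs R (Bar e) S. acls (wperm (nswap b e) w) \<in> bar_lang R F s)"
      by (rule IH)
    also have "\<dots> \<longleftrightarrow>
        (\<exists>s\<in>S. \<exists>s'. (s, Bar e, s') \<in> R \<and> acls (wperm (nswap b e) w) \<in> bar_lang R F s')"
      unfolding succs_def by blast
    finally show ?thesis .
  qed
  show ?thesis
  proof
    assume "acls (Bar b # w) \<in> h S"
    obtain e where e: "e \<notin> E \<union> names w"
      using ex_fresh_name[OF E] by blast
    then obtain s s' where "s \<in> S" and s': "(s, Bar e, s') \<in> R"
      "acls (wperm (nswap b e) w) \<in> bar_lang R F s'"
      using \<open>acls (Bar b # w) \<in> h S\<close> unfolding via_fresh[OF e] by blast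
    have "acls (Bar e # wperm (nswap b e) w) \<in> bar_lang R F s"
      using Cons_mem_bar_langI[OF s'] .
    then show "\<exists>s\<in>S. acls (Bar b # w) \<in> bar_lang R F s"
      using \<open>s \<in> S\<close> rename[OF e] by auto
  next
    assume "\<exists>s\<in>S. acls (Bar b # w) \<in> bar_lang R F s"
    then obtain s where s: "s \<in> S" "acls (Bar b # w) \<in> bar_lang R F s"
      by blast
    obtain e s' where e: "e \<notin> E \<union> names w" and s': "(s, Bar e, s') \<in> R"
      "acls (wperm (nswap b e) w) \<in> bar_lang R F s'"
      by (rule Bar_mem_bar_lang_fresh[OF s(2) E])
    then show "acls (Bar b # w) \<in> h S"
      unfolding via_fresh[OF e] using s(1) by blast
  qed
qed

lemma acls_mem_h_iff:
  "finite S \<Longrightarrow> S \<subseteq> Q \<Longrightarrow> acls w \<in> h S \<longleftrightarrow> (\<exists>s\<in>S. acls w \<in> bar_lang R F s)"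
proof (induction "length w" arbitrary: w S rule: less_induct)
  case less
  have S_Pufs: "S \<in> Pufs Q act"
    using Pufs_finite[OF nominal_Q less.prems] .
  have IH: "acls u \<in> h (succs R l S) \<longleftrightarrow> (\<exists>s\<in>succs R l S. acls u \<in> bar_lang R F s)"
    if "length u < length w" for u l
    by (rule less.hyps[OF that finite_succs[OF less.prems] succs_subset])
  show ?case
  proof (cases w)
    case Nil
    then show ?thesis
      using Nil_mem_h_iff[OF S_Pufs] by (simp add: Nil_mem_bar_lang_iff)
  next
    case (Cons l u)
    show ?thesis
    proof (cases l)
      case (Plain a)
      have "acls w \<in> h S \<longleftrightarrow> acls u \<in> h (succs R (Plain a) S)"
        unfolding Cons Plain by (rule Plain_mem_h_iff[OF S_Pufs])
      also have "\<dots> \<longleftrightarrow> (\<exists>s\<in>succs R (Plain a) S. acls u \<in> bar_lang R F s)"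
        by (rule IH) (simp add: Cons)
      also have "\<dots> \<longleftrightarrow> (\<exists>s\<in>S. acls w \<in> bar_lang R F s)"
        unfolding Cons Plain Plain_mem_bar_lang_iff succs_def by blast
      finally show ?thesis .
    next
      case (Bar b)
      show ?thesis
        unfolding Cons Bar by (rule Bar_mem_h_iff_bar_lang[OF less.prems IH]) (simp add: Cons)
    qed
  qed
qed

lemma h_eq_bar_lang:
  assumes S: "finite S" "S \<subseteq> Q"
  shows "h S = (\<Union>s\<in>S. bar_lang R F s)"
proof (rule set_eqI)
  fix X
  show "X \<in> h S \<longleftrightarrow> X \<in> (\<Union>s\<in>S. bar_lang R F s)"
  proof (cases "X \<in> range acls")
    case True
    then obtain w where "X = acls w"
      by blast
    then show ?thesis
      using acls_mem_h_iff[OF S, of w] by simp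
  next
    case False
    moreover have "h S \<subseteq> range acls"
      using Term_subset_range_acls[OF h_in_Term[OF Pufs_finite[OF nominal_Q S]]] .
    moreover have "bar_lang R F s \<subseteq> range acls" for s
      unfolding bar_lang_def by blast
    ultimately show ?thesis
      by blast
  qed
qed

end

theorem corollary4p22:
  fixes Q :: "'q set" and act :: "'q action" and R :: "('q \<times> bletter \<times> 'q) set"
    and F :: "'q set" and h :: "'q set \<Rightarrow> bclass set"
  assumes "rnna Q act R F"
    and "G_hom (Pufs Q act) (setact act) (det Q act R F) Term langperm tau h"
    and "q \<in> Q"
  shows "h {q} = bar_lang R F q"
proof -
  interpret rnna_det_hom Q act R F h
    by unfold_locales (fact assms)+
  show ?thesis
    using h_eq_bar_lang[of "{q}"] assms(3) by simp
qed

end
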